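(* Let $M$ be a finitely presented $n$-parameter persistence module with minimal free resolution $(F_\bullet,p_\bullet)$ and fixed decomposition isomorphisms as described in the context. If $\vec r\in\xi_1(M)$ (a generator of $F_1$), then $\vec r^{\mathcal L_{\vec r}}\notin\ker p_1^{\mathcal L_{\vec r}}$, and so $\vec r$ kills a bar in $M^{\mathcal L_{\vec r}}\cong_\phi\bigoplus_{j}\mathds 1^{I_j}$.
   Context: Modules are $\mathbb{R}^n$-graded modules over $P_n$ (monoid ring over a field of $([0,\infty)^n,+)$); $\xi_1(M)$ denotes the generators (with their grades) of $F_1$ in a minimal free resolution. For $\vec a\in\mathbb{R}^n$, $\mathcal L_{\vec a}$ is the line $t\mapsto\vec a+t\vec1$. For a positively sloped line $\mathcal L$ with order-preserving $\|\cdot\|_\infty$-isometric parametrization $\iota$, $M^{\mathcal L}=M\circ\iota$, and $(F^{\mathcal L}_\bullet,p^{\mathcal L}_\bullet)$ is the induced free resolution of $M^{\mathcal L}$ (pullback along $\iota$): generator $\vec a$ of $F_i$ corresponds to $\vec a^{\mathcal L}$ of grade $\iota^{-1}(\mathrm{push}_{\mathcal L}(\mathrm{gr}\,\vec a))$, where $\mathrm{push}_{\mathcal L}(\vec p)=\min\{\vec q\in\mathcal L:\vec q\ge\vec p\}$. For each $\mathcal L$ fix an isomorphism $\phi:M^{\mathcal L}\to\bigoplus_{j}\mathds 1^{I_j}$, $I_j=[b_j,d_j)$ (possibly empty), with as many summands as generators of $F_0$. The canonical resolution $F'_\bullet$ of $\bigoplus\mathds 1^{I_j}$ has $F'_0$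 free on $\{b_j\}$, $F'_1$ free on $\{d_j:d_j\ne\infty\}$, $d_j\mapsto x^{d_j-b_j}b_j$; $\phi$ lifts to a chain map $\phi_\bullet:F^{\mathcal L}_\bullet\to F'_\bullet$. A generator $\vec r$ of $F_1$ kills the bar $I_j$ if $\mathrm{gr}(\vec r^{\mathcal L})=d_j$ and the coefficient of $d_j$ in $\phi_1(\vec r^{\mathcal L})$ is nonzero (generating a bar is defined analogously with $\phi_0$). The isomorphisms are fixed so that each bar is generated by a unique generator of $F^{\mathcal L}_0$ and killed by a unique generator of $F^{\mathcal L}_1$, and every generator of $F^{\mathcal L}_0$ generates some bar. *)

theory Defs
  imports "HOL-Analysis.Analysis"
begin

text \<open>A finitely generated free graded module (over P_n when the grade type is real^'n,
 over P_1 when the grade type is real) is given by a finite set of basis indices together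
 with the grade of each basis element (a generator).  Its homogeneous component at grade t
 is the k-vector space with basis the elements x^(t - gr b) b for generators b with gr b <= t;
 we represent an element of this component by its coordinate function nat => 'k.  In these
 coordinates the structure maps F(s) -> F(t), s <= t (multiplication by x^(t-s)) are the
 inclusions.\<close>

record 'g free_mod =
  basis :: "nat set"
  grade :: "nat \<Rightarrow> 'g"

definition free_ok :: "('g::ord) free_mod \<Rightarrow> bool" where
  "free_ok F \<longleftrightarrow> finite (basis F)"

definition fcomp :: "('g::ord) free_mod \<Rightarrow> 'g \<Rightarrow> (nat \<Rightarrow> 'k::zero) set" where
  "fcomp F t = {v. \<forall>i. v i \<noteq> 0 \<longrightarrow> i \<in> basis F \<and> grade F i \<le> t}"

text \<open>Degree-t component of m F, where m is the ideal of P_n spanned by the monomials x^v, v \<noteq> 0: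
 spanned by the x^(t - gr b) b with gr b <= t and gr b \<noteq> t.\<close>
definition mcomp :: "('g::ord) free_mod \<Rightarrow> 'g \<Rightarrow> (nat \<Rightarrow> 'k::zero) set" where
  "mcomp F t = {v. \<forall>i. v i \<noteq> 0 \<longrightarrow> i \<in> basis F \<and> grade F i \<le> t \<and> grade F i \<noteq> t}"

definition gen :: "nat \<Rightarrow> nat \<Rightarrow> 'k::{zero,one}" where
  "gen j = (\<lambda>i. if i = j then 1 else 0)"

text \<open>A graded (degree preserving) homomorphism F -> G of free modules is determined by a
 scalar matrix C: generator j of F is sent to sum_i C i j x^(gr j - gr i) (generator i of G),
 which requires C i j \<noteq> 0 only if gr i <= gr j.\<close>
definition is_fhom :: "('g::ord) free_mod \<Rightarrow> 'g free_mod \<Rightarrow> (nat \<Rightarrow> nat \<Rightarrow> 'k::zero) \<Rightarrow> bool" where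
  "is_fhom F G C \<longleftrightarrow>
     (\<forall>i j. C i j \<noteq> 0 \<longrightarrow> i \<in> basis G \<and> j \<in> basis F \<and> grade G i \<le> grade F j)"

definition happ :: "('g::ord) free_mod \<Rightarrow> (nat \<Rightarrow> nat \<Rightarrow> 'k::comm_ring_1) \<Rightarrow> (nat \<Rightarrow> 'k) \<Rightarrow> (nat \<Rightarrow> 'k)" where
  "happ F C v = (\<lambda>i. \<Sum>j\<in>basis F. C i j * v j)"

definition hker :: "('g::ord) free_mod \<Rightarrow> (nat \<Rightarrow> nat \<Rightarrow> 'k::comm_ring_1) \<Rightarrow> 'g \<Rightarrow> (nat \<Rightarrow> 'k) set" where
  "hker F C t = {v \<in> fcomp F t. \<forall>i. happ F C v i = 0}"

definition himg :: "('g::ord) free_mod \<Rightarrow> (nat \<Rightarrow> nat \<Rightarrow> 'k::comm_ring_1) \<Rightarrow> 'g \<Rightarrow> (nat \<Rightarrow> 'k) set" where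
  "himg F C t = happ F C ` fcomp F t"

definition min_free_res ::
  "(nat \<Rightarrow> ('g::ord) free_mod) \<Rightarrow> (nat \<Rightarrow> nat \<Rightarrow> nat \<Rightarrow> 'k::field) \<Rightarrow> bool" where
  "min_free_res F p \<longleftrightarrow>
     (\<forall>i. free_ok (F i)) \<and>
     (\<forall>i\<ge>1. is_fhom (F i) (F (i - 1)) (p i)) \<and>
     (\<forall>i\<ge>1. \<forall>t. hker (F i) (p i) t = himg (F (i + 1)) (p (i + 1)) t) \<and>
     (\<forall>i\<ge>1. \<forall>t. himg (F i) (p i) t \<subseteq> mcomp (F (i - 1)) t)"

definition ones :: "real^'n" where
  "ones = (\<chi> i. 1)"

definition lineL :: "real^'n \<Rightarrow> real \<Rightarrow> real^'n" where
  "lineL a t = a + t *\<^sub>R ones"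

text \<open>iota^(-1)(push_L(p)), where push_L(p) = min {q \<in> L : q >= p}.\<close>
definition push_par :: "real^'n \<Rightarrow> real^'n \<Rightarrow> real" where
  "push_par a p = (LEAST t. p \<le> lineL a t)"

text \<open>The induced free module F^L (pullback along iota); the matrices of the maps are unchanged.\<close>
definition restr :: "real^'n \<Rightarrow> (real^'n) free_mod \<Rightarrow> real free_mod" where
  "restr a F = \<lparr>basis = basis F, grade = (\<lambda>i. push_par a (grade F i))\<rparr>"

text \<open>Bars I_j = [b j, d j), j \<in> J, where d j = None means d_j = \<infinity>.\<close>
definition in_bar :: "(nat \<Rightarrow> real) \<Rightarrow> (nat \<Rightarrow> real option) \<Rightarrow> nat \<Rightarrow> real \<Rightarrow> bool" where
  "in_bar b d j t \<longleftrightarrow> b j \<le> t \<and> (case d j of None \<Rightarrow> True | Some e \<Rightarrow> t < e)"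

text \<open>Component at t of the direct sum of the interval modules 1^{I_j}, j \<in> J.\<close>
definition bcomp :: "nat set \<Rightarrow> (nat \<Rightarrow> real) \<Rightarrow> (nat \<Rightarrow> real option) \<Rightarrow> real \<Rightarrow> (nat \<Rightarrow> 'k::zero) set" where
  "bcomp J b d t = {w. \<forall>j. w j \<noteq> 0 \<longrightarrow> j \<in> J \<and> in_bar b d j t}"

text \<open>Structure map (s <= t) of the direct sum of interval modules (evaluated at target t).\<close>
definition bmap :: "(nat \<Rightarrow> real) \<Rightarrow> (nat \<Rightarrow> real option) \<Rightarrow> real \<Rightarrow> (nat \<Rightarrow> 'k::zero) \<Rightarrow> (nat \<Rightarrow> 'k)" where
  "bmap b d t w = (\<lambda>j. if in_bar b d j t then w j else 0)"

text \<open>Canonical resolution F' : F'_0 free on {b_j}, F'_1 free on {d_j : d_j \<noteq> \<infinity>},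
 d_j |-> x^(d_j - b_j) b_j; augmentation F'_0 -> direct sum sends b_j to the generator of 1^{I_j}.\<close>
definition canon0 :: "nat set \<Rightarrow> (nat \<Rightarrow> real) \<Rightarrow> real free_mod" where
  "canon0 J b = \<lparr>basis = J, grade = b\<rparr>"

definition canon1 :: "nat set \<Rightarrow> (nat \<Rightarrow> real option) \<Rightarrow> real free_mod" where
  "canon1 J d = \<lparr>basis = {j \<in> J. d j \<noteq> None}, grade = (\<lambda>j. the (d j))\<rparr>"

definition canon_p :: "nat set \<Rightarrow> (nat \<Rightarrow> real option) \<Rightarrow> nat \<Rightarrow> nat \<Rightarrow> 'k::{zero,one}" where
  "canon_p J d i j = (if i = j \<and> j \<in> J \<and> d j \<noteq> None then 1 else 0)"

definition canon_eps :: "(nat \<Rightarrow> real) \<Rightarrow> (nat \<Rightarrow> real option) \<Rightarrow> real \<Rightarrow> (nat \<Rightarrow> 'k::zero) \<Rightarrow> (nat \<Rightarrow> 'k)" where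
  "canon_eps b d t w = bmap b d t w"

text \<open>M = coker p_1, so M^L = coker p_1^L.  We encode phi : M^L -> direct sum via the composite
 phi o eps^L, a family of maps phit t : F_0^L(t) -> (direct sum)(t).  It is a natural linear
 map vanishing exactly on im p_1^L (so it descends to an injective map on M^L) and is
 surjective at every t, i.e. phi is an isomorphism of persistence modules.\<close>
definition bar_iso ::
  "real free_mod \<Rightarrow> real free_mod \<Rightarrow> (nat \<Rightarrow> nat \<Rightarrow> 'k::field) \<Rightarrow>
   nat set \<Rightarrow> (nat \<Rightarrow> real) \<Rightarrow> (nat \<Rightarrow> real option) \<Rightarrow> (real \<Rightarrow> (nat \<Rightarrow> 'k) \<Rightarrow> (nat \<Rightarrow> 'k)) \<Rightarrow> bool" where
  "bar_iso F0 F1 p1 J b d phit \<longleftrightarrow>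
     (\<forall>t. \<forall>v\<in>fcomp F0 t. phit t v \<in> bcomp J b d t) \<and>
     (\<forall>t. \<forall>v\<in>fcomp F0 t. \<forall>w\<in>fcomp F0 t. phit t (\<lambda>i. v i + w i) = (\<lambda>j. phit t v j + phit t w j)) \<and>
     (\<forall>t c. \<forall>v\<in>fcomp F0 t. phit t (\<lambda>i. c * v i) = (\<lambda>j. c * phit t v j)) \<and>
     (\<forall>s t. s \<le> t \<longrightarrow> (\<forall>v\<in>fcomp F0 s. phit t v = bmap b d t (phit s v))) \<and>
     (\<forall>t. \<forall>v\<in>fcomp F0 t. phit t v = (\<lambda>j. 0) \<longleftrightarrow> v \<in> himg F1 p1 t) \<and>
     (\<forall>t. bcomp J b d t \<subseteq> phit t ` fcomp F0 t)"

text \<open>(Phi0, Phi1) is a chain map F^L -> F' lifting phi (in degrees 0 and 1).\<close>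
definition lifts ::
  "real free_mod \<Rightarrow> real free_mod \<Rightarrow> (nat \<Rightarrow> nat \<Rightarrow> 'k::field) \<Rightarrow>
   nat set \<Rightarrow> (nat \<Rightarrow> real) \<Rightarrow> (nat \<Rightarrow> real option) \<Rightarrow> (real \<Rightarrow> (nat \<Rightarrow> 'k) \<Rightarrow> (nat \<Rightarrow> 'k)) \<Rightarrow>
   (nat \<Rightarrow> nat \<Rightarrow> 'k) \<Rightarrow> (nat \<Rightarrow> nat \<Rightarrow> 'k) \<Rightarrow> bool" where
  "lifts F0 F1 p1 J b d phit Phi0 Phi1 \<longleftrightarrow>
     is_fhom F0 (canon0 J b) Phi0 \<and> is_fhom F1 (canon1 J d) Phi1 \<and>
     (\<forall>t. \<forall>v\<in>fcomp F0 t. canon_eps b d t (happ F0 Phi0 v) = phit t v) \<and>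
     (\<forall>t. \<forall>u\<in>fcomp F1 t.
        happ (canon1 J d) (canon_p J d) (happ F1 Phi1 u) = happ F0 Phi0 (happ F1 p1 u))"

definition generates :: "real free_mod \<Rightarrow> (nat \<Rightarrow> real) \<Rightarrow> (nat \<Rightarrow> nat \<Rightarrow> 'k::zero) \<Rightarrow> nat \<Rightarrow> nat \<Rightarrow> bool" where
  "generates F0 b Phi0 i j \<longleftrightarrow> grade F0 i = b j \<and> Phi0 j i \<noteq> 0"

definition kills :: "real free_mod \<Rightarrow> (nat \<Rightarrow> real option) \<Rightarrow> (nat \<Rightarrow> nat \<Rightarrow> 'k::zero) \<Rightarrow> nat \<Rightarrow> nat \<Rightarrow> bool" where
  "kills F1 d Phi1 r j \<longleftrightarrow> d j = Some (grade F1 r) \<and> Phi1 j r \<noteq> 0"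

definition fixed_ok ::
  "real free_mod \<Rightarrow> real free_mod \<Rightarrow> nat set \<Rightarrow> (nat \<Rightarrow> real) \<Rightarrow> (nat \<Rightarrow> real option) \<Rightarrow>
   (nat \<Rightarrow> nat \<Rightarrow> 'k::zero) \<Rightarrow> (nat \<Rightarrow> nat \<Rightarrow> 'k) \<Rightarrow> bool" where
  "fixed_ok F0 F1 J b d Phi0 Phi1 \<longleftrightarrow>
     (\<forall>j\<in>J. \<exists>!i. i \<in> basis F0 \<and> generates F0 b Phi0 i j) \<and>
     (\<forall>j\<in>J. d j \<noteq> None \<longrightarrow> (\<exists>!r. r \<in> basis F1 \<and> kills F1 d Phi1 r j)) \<and>
     (\<forall>i\<in>basis F0. \<exists>j\<in>J. generates F0 b Phi0 i j)"

end

theory Submission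
  imports Defs
begin

text \<open>Restricted to the line L through the grade a of r, the generator r sits at parameter 0,
 and p_1(r) is a boundary at 0 but at no earlier parameter: a preimage at t < 0 involves only
 generators of grade below a, so subtracting it from r leaves a cycle with a unit coefficient on
 a generator of its own degree, which minimality (ker p_1 = im p_2 \<subseteq> m F_1) forbids.
 On the bar side, the lift sends p_1(r) to a combination of bars that have all died by time 0,
 and the chain-map identity makes these coefficients those of Phi_1(r). If no bar dies exactly
 at 0, every generator occurring in p_1(r) is also born before 0 (one born at 0 generates a bar
 born at 0 that occurs with nonzero coefficient and so cannot have died), and then p_1(r) is a
 boundary already at the latest of these birth and death times.\<close>

lemma fcomp_mono: "s \<le> t \<Longrightarrow> fcomp F s \<subseteq> fcomp (F :: ('g::preorder) free_mod) t"
  by (auto simp: fcomp_def intro: order_trans)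

lemma happ_gen:
  "r \<in> basis F \<Longrightarrow> finite (basis F) \<Longrightarrow> happ F C (gen r) = (\<lambda>i. C i r)"
  by (auto simp: happ_def gen_def if_distrib[of "(*) _"] cong: if_cong)

lemma happ_diff: "happ F C (\<lambda>k. x k - y k) i = happ F C x i - happ F C y i"
  by (simp add: happ_def sum_subtractf right_diff_distrib)

lemma gen_in_fcomp: "r \<in> basis F \<Longrightarrow> gen r \<in> fcomp (F :: ('g::preorder) free_mod) (grade F r)"
  by (simp add: fcomp_def gen_def)

lemma happ_in_fcomp:
  fixes F G :: "('g::preorder) free_mod"
  assumes "is_fhom F G C" and "v \<in> fcomp F t"
  shows "happ F C v \<in> fcomp G t"
proof -
  have "i \<in> basis G \<and> grade G i \<le> t" if "happ F C v i \<noteq> 0" for i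
  proof -
    from that obtain j where "C i j * v j \<noteq> 0"
      unfolding happ_def by (meson sum.not_neutral_contains_not_neutral)
    then have "C i j \<noteq> 0" and "v j \<noteq> 0"
      by auto
    with assms have "i \<in> basis G" and "grade G i \<le> grade F j" and "grade F j \<le> t"
      by (auto simp: is_fhom_def fcomp_def)
    then show ?thesis
      using order_trans by blast
  qed
  then show ?thesis by (simp add: fcomp_def)
qed

lemma min_free_resD:
  assumes "min_free_res F p"
  shows "finite (basis (F i))" and "1 \<le> i \<Longrightarrow> is_fhom (F i) (F (i - 1)) (p i)"
  using assms by (auto simp: min_free_res_def free_ok_def)

lemma min_free_res_hker_coeff:
  assumes res: "min_free_res F p" and "1 \<le> i"
    and "v \<in> hker (F i) (p i) t" and "v k \<noteq> 0"
  shows "grade (F i) k \<noteq> t"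
proof -
  have "hker (F i) (p i) t = himg (F (i + 1)) (p (i + 1)) t"
    using res \<open>1 \<le> i\<close> unfolding min_free_res_def by blast
  moreover have "himg (F (i + 1)) (p (i + 1)) t \<subseteq> mcomp (F (i + 1 - 1)) t"
    using res le_add2 unfolding min_free_res_def by blast
  ultimately show ?thesis
    using assms(3,4) by (auto simp: mcomp_def)
qed

lemma min_free_res_gen_not_image:
  fixes F :: "nat \<Rightarrow> ('g::preorder) free_mod"
  assumes res: "min_free_res F p" and "1 \<le> i" and r: "r \<in> basis (F i)"
    and u: "u \<in> fcomp (F i) (grade (F i) r)" and "u r = 0"
  shows "happ (F i) (p i) u \<noteq> happ (F i) (p i) (gen r)"
proof
  assume same_image: "happ (F i) (p i) u = happ (F i) (p i) (gen r)"
  define c where "c = (\<lambda>k. gen r k - u k)"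
  have "c \<in> fcomp (F i) (grade (F i) r)"
    using u r by (auto simp: c_def fcomp_def gen_def)
  then have "c \<in> hker (F i) (p i) (grade (F i) r)"
    using same_image by (simp add: hker_def c_def happ_diff)
  moreover have "c r \<noteq> 0"
    using \<open>u r = 0\<close> by (simp add: c_def gen_def)
  ultimately show False
    using min_free_res_hker_coeff[OF res \<open>1 \<le> i\<close>] by blast
qed

lemma lineL_le_iff: "q \<le> lineL a t \<longleftrightarrow> (\<forall>k. q$k \<le> a$k + t)"
  by (simp add: lineL_def ones_def less_eq_vec_def)

lemma lineL_0 [simp]: "lineL a 0 = a"
  by (simp add: lineL_def)

lemma push_par_eq_Max: "push_par a q = Max (range (\<lambda>k. q$k - a$k))"
  unfolding push_par_def
proof (rule Least_equality)
  show "q \<le> lineL a (Max (range (\<lambda>k. q$k - a$k)))"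
    unfolding lineL_le_iff
  proof
    fix k
    have "q$k - a$k \<le> Max (range (\<lambda>k. q$k - a$k))" by (rule Max_ge) auto
    then show "q$k \<le> a$k + Max (range (\<lambda>k. q$k - a$k))" by linarith
  qed
  show "\<And>t. q \<le> lineL a t \<Longrightarrow> Max (range (\<lambda>k. q$k - a$k)) \<le> t"
    unfolding lineL_le_iff by (auto simp: algebra_simps)
qed

lemma push_par_le_iff: "push_par a q \<le> t \<longleftrightarrow> q \<le> lineL a t"
  by (auto simp: push_par_eq_Max lineL_le_iff algebra_simps)

lemma push_par_mono: "q \<le> q' \<Longrightarrow> push_par a q \<le> push_par a q'"
  by (meson order_refl order_trans push_par_le_iff)

lemma push_par_self: "push_par a a = 0"
  by (simp add: push_par_eq_Max)

lemma le_lineL_iff: "a \<le> lineL a t \<longleftrightarrow> 0 \<le> t"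
  by (simp flip: push_par_le_iff add: push_par_self)

lemma lineL_le: "t \<le> 0 \<Longrightarrow> lineL a t \<le> a"
  by (simp add: lineL_def ones_def less_eq_vec_def)

lemma fcomp_restr: "fcomp (restr a F) t = fcomp F (lineL a t)"
  by (simp add: fcomp_def restr_def push_par_le_iff)

lemma happ_restr: "happ (restr a F) C = happ F C"
  by (rule ext) (simp add: happ_def restr_def)

lemma hker_restr: "hker (restr a F) C t = hker F C (lineL a t)"
  by (simp add: hker_def fcomp_restr happ_restr)

lemma himg_restr: "himg (restr a F) C t = himg F C (lineL a t)"
  by (simp add: himg_def fcomp_restr happ_restr)

lemma is_fhom_restr: "is_fhom F G C \<Longrightarrow> is_fhom (restr a F) (restr a G) C"
  by (simp add: is_fhom_def restr_def push_par_mono)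

lemma min_free_res_gen_image_not_earlier:
  assumes res: "min_free_res F p" and "1 \<le> i" and r: "r \<in> basis (F i)" and "t < 0"
  shows "happ (F i) (p i) (gen r) \<notin> himg (F i) (p i) (lineL (grade (F i) r) t)"
proof
  let ?a = "grade (F i) r"
  assume "happ (F i) (p i) (gen r) \<in> himg (F i) (p i) (lineL ?a t)"
  then obtain u where u: "u \<in> fcomp (F i) (lineL ?a t)"
    and image: "happ (F i) (p i) u = happ (F i) (p i) (gen r)"
    by (auto simp: himg_def)
  have "lineL ?a t \<le> ?a"
    by (rule lineL_le) (use \<open>t < 0\<close> in simp)
  then have "u \<in> fcomp (F i) ?a"
    using u fcomp_mono by blast
  moreover have "u r = 0"
    using u \<open>t < 0\<close> le_lineL_iff[of ?a t] by (auto simp: fcomp_def)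
  ultimately show False
    using min_free_res_gen_not_image[OF res \<open>1 \<le> i\<close> r] image by blast
qed

lemma happ_canon:
  "finite J \<Longrightarrow> happ (canon1 J d) (canon_p J d) x j = (if j \<in> J \<and> d j \<noteq> None then x j else 0)"
  by (auto simp: happ_def canon1_def canon_p_def if_distrib[of "\<lambda>c. c * _"] cong: if_cong)

locale bar_lift =
  fixes F0 F1 :: "real free_mod" and p1 :: "nat \<Rightarrow> nat \<Rightarrow> 'k::field"
    and J :: "nat set" and b :: "nat \<Rightarrow> real" and d :: "nat \<Rightarrow> real option"
    and phit :: "real \<Rightarrow> (nat \<Rightarrow> 'k) \<Rightarrow> (nat \<Rightarrow> 'k)" and Phi0 Phi1 :: "nat \<Rightarrow> nat \<Rightarrow> 'k"
  assumes finite_F0: "finite (basis F0)" and finite_F1: "finite (basis F1)"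
    and finite_J: "finite J"
    and p1_hom: "is_fhom F1 F0 p1"
    and birth_le_death: "\<forall>j\<in>J. \<forall>e. d j = Some e \<longrightarrow> b j \<le> e"
    and iso: "bar_iso F0 F1 p1 J b d phit"
    and lift: "lifts F0 F1 p1 J b d phit Phi0 Phi1"
    and fixed: "fixed_ok F0 F1 J b d Phi0 Phi1"
begin

lemma phit_eq_bmap: "w \<in> fcomp F0 t \<Longrightarrow> phit t w = bmap b d t (happ F0 Phi0 w)"
  using lift by (simp add: lifts_def canon_eps_def)

lemma Phi0_entry: "Phi0 j i \<noteq> 0 \<Longrightarrow> j \<in> J \<and> i \<in> basis F0 \<and> b j \<le> grade F0 i"
  using lift by (auto simp: lifts_def is_fhom_def canon0_def)

lemma lifted_support:
  assumes "w \<in> fcomp F0 s" and "happ F0 Phi0 w j \<noteq> 0"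
  shows "j \<in> J \<and> b j \<le> s"
proof -
  from assms(2) obtain i where "Phi0 j i * w i \<noteq> 0"
    unfolding happ_def by (meson sum.not_neutral_contains_not_neutral)
  with assms(1) Phi0_entry[of j i] show ?thesis by (force simp: fcomp_def)
qed

lemma boundary_bars_dead:
  assumes "w \<in> himg F1 p1 s" and w: "w \<in> fcomp F0 s" and v: "happ F0 Phi0 w j \<noteq> 0"
  shows "\<exists>e. d j = Some e \<and> e \<le> s"
proof -
  have "phit s w = (\<lambda>_. 0)"
    using iso assms(1,2) by (simp add: bar_iso_def)
  then have "\<not> in_bar b d j s"
    using v phit_eq_bmap[OF w] by (metis bmap_def)
  then show ?thesis
    using lifted_support[OF w v] by (cases "d j") (auto simp: in_bar_def)
qed

lemma Phi1_gen:
  assumes "r \<in> basis F1" and "j \<in> J" and "d j \<noteq> None"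
  shows "Phi1 j r = happ F0 Phi0 (happ F1 p1 (gen r)) j"
proof -
  have "happ (canon1 J d) (canon_p J d) (happ F1 Phi1 (gen r)) = happ F0 Phi0 (happ F1 p1 (gen r))"
    using lift gen_in_fcomp[OF assms(1)] unfolding lifts_def by blast
  then show ?thesis
    using assms happ_gen[OF assms(1) finite_F1] happ_canon[OF finite_J] by metis
qed

text \<open>Uniqueness of the generator of a bar makes i the only contribution to the coefficient
 of the bar it generates.\<close>
lemma generated_bar_coeff:
  assumes w: "w \<in> fcomp F0 s" and i: "i \<in> basis F0" "grade F0 i = s" "w i \<noteq> 0"
  shows "\<exists>j\<in>J. b j = s \<and> happ F0 Phi0 w j \<noteq> 0"
proof -
  obtain j where j: "j \<in> J" "generates F0 b Phi0 i j"
    using fixed i(1) by (auto simp: fixed_ok_def)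
  have unique: "i' = i" if "i' \<in> basis F0" "generates F0 b Phi0 i' j" for i'
    using fixed j i(1) that by (metis fixed_ok_def)
  have bj: "b j = s"
    using j(2) i(2) by (simp add: generates_def)
  have others: "Phi0 j i' * w i' = 0" if "i' \<in> basis F0 - {i}" for i'
  proof (rule ccontr)
    assume "Phi0 j i' * w i' \<noteq> 0"
    then have "generates F0 b Phi0 i' j"
      using Phi0_entry[of j i'] w bj by (force simp: generates_def fcomp_def)
    with unique that show False by blast
  qed
  have "happ F0 Phi0 w j = Phi0 j i * w i + (\<Sum>i'\<in>basis F0 - {i}. Phi0 j i' * w i')"
    unfolding happ_def using sum.remove[OF finite_F0 i(1)] .
  also have "(\<Sum>i'\<in>basis F0 - {i}. Phi0 j i' * w i') = 0"
    by (rule sum.neutral) (use others in blast)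
  finally show ?thesis
    using j i(3) bj by (auto simp: generates_def)
qed

lemma boundary_before:
  assumes w: "w \<in> fcomp F0 s"
    and born: "\<forall>i. w i \<noteq> 0 \<longrightarrow> grade F0 i < s"
    and died: "\<forall>j. happ F0 Phi0 w j \<noteq> 0 \<longrightarrow> (\<exists>e. d j = Some e \<and> e < s)"
  shows "\<exists>t<s. w \<in> himg F1 p1 t"
proof -
  define G where "G = grade F0 ` {i \<in> basis F0. w i \<noteq> 0}"
  define E where "E = (\<lambda>j. the (d j)) ` {j \<in> J. happ F0 Phi0 w j \<noteq> 0}"
  define t where "t = Max (insert (s - 1) (G \<union> E))"
  have fin: "finite (insert (s - 1) (G \<union> E))"
    using finite_F0 finite_J by (simp add: G_def E_def)
  have "x < s" if "x \<in> G \<union> E" for x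
    using that born died by (force simp: G_def E_def)
  then have "t < s"
    using fin by (simp add: t_def)
  have w_t: "w \<in> fcomp F0 t"
    using w fin by (force simp: fcomp_def G_def t_def)
  have "\<not> in_bar b d j t" if v: "happ F0 Phi0 w j \<noteq> 0" for j
  proof -
    obtain e where "d j = Some e"
      using died v by blast
    moreover have "e \<in> E"
      using v lifted_support[OF w] \<open>d j = Some e\<close> by (force simp: E_def)
    then have "e \<le> t"
      unfolding t_def using fin by (intro Max_ge) auto
    ultimately show ?thesis
      by (simp add: in_bar_def)
  qed
  then have "phit t w = (\<lambda>_. 0)"
    by (auto simp: phit_eq_bmap[OF w_t] bmap_def fun_eq_iff)
  then show ?thesis
    using iso w_t \<open>t < s\<close> by (auto simp: bar_iso_def)
qed

lemma kills_bar:
  assumes r: "r \<in> basis F1"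
    and not_earlier: "\<forall>t < grade F1 r. happ F1 p1 (gen r) \<notin> himg F1 p1 t"
  shows "\<exists>j\<in>J. kills F1 d Phi1 r j"
proof (rule ccontr)
  assume no_kill: "\<not> ?thesis"
  define s where "s = grade F1 r"
  define w where "w = happ F1 p1 (gen r)"
  have w: "w \<in> fcomp F0 s"
    using happ_in_fcomp[OF p1_hom gen_in_fcomp[OF r]] by (simp add: w_def s_def)
  have boundary: "w \<in> himg F1 p1 s"
    using gen_in_fcomp[OF r] unfolding himg_def w_def s_def by blast
  have died: "\<exists>e. d j = Some e \<and> e < s" if v: "happ F0 Phi0 w j \<noteq> 0" for j
  proof -
    obtain e where e: "d j = Some e" "e \<le> s"
      using boundary_bars_dead[OF boundary w v] by blast
    have "e \<noteq> s"
    proof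
      assume "e = s"
      then have "kills F1 d Phi1 r j"
        using e v Phi1_gen[OF r] lifted_support[OF w v] by (simp add: kills_def w_def s_def)
      with no_kill lifted_support[OF w v] show False by blast
    qed
    with e show ?thesis by auto
  qed
  have born: "grade F0 i < s" if wi: "w i \<noteq> 0" for i
  proof -
    have "i \<in> basis F0" "grade F0 i \<le> s"
      using w wi by (auto simp: fcomp_def)
    moreover have "grade F0 i \<noteq> s"
    proof
      assume "grade F0 i = s"
      then obtain j where "j \<in> J" "b j = s" "happ F0 Phi0 w j \<noteq> 0"
        using generated_bar_coeff[OF w \<open>i \<in> basis F0\<close> _ wi] by blast
      with died birth_le_death show False by force
    qed
    ultimately show ?thesis by simp
  qed
  obtain t where "t < s" and "w \<in> himg F1 p1 t"
    using boundary_before[OF w] born died by blast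
  with not_earlier show False
    by (simp add: w_def s_def)
qed

end

theorem mainTheorem16:
  fixes F :: "nat \<Rightarrow> (real^'n) free_mod"
    and p :: "nat \<Rightarrow> nat \<Rightarrow> nat \<Rightarrow> 'k::field"
    and r :: nat
  assumes res: "min_free_res F p"
    and r_gen: "r \<in> basis (F 1)"
  shows "gen r \<notin> hker (restr (grade (F 1) r) (F 1)) (p 1)
                    (grade (restr (grade (F 1) r) (F 1)) r)
     \<and> (\<forall>J b d phit Phi0 Phi1.
           J = {..<card (basis (F 0))} \<longrightarrow>
           (\<forall>j\<in>J. \<forall>e. d j = Some e \<longrightarrow> b j \<le> e) \<longrightarrow>
           bar_iso (restr (grade (F 1) r) (F 0)) (restr (grade (F 1) r) (F 1)) (p 1) J b d phit \<longrightarrow>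
           lifts (restr (grade (F 1) r) (F 0)) (restr (grade (F 1) r) (F 1)) (p 1) J b d phit Phi0 Phi1 \<longrightarrow>
           fixed_ok (restr (grade (F 1) r) (F 0)) (restr (grade (F 1) r) (F 1)) J b d Phi0 Phi1 \<longrightarrow>
           (\<exists>j\<in>J. kills (restr (grade (F 1) r) (F 1)) d Phi1 r j))"
proof (intro conjI allI impI)
  let ?a = "grade (F 1) r"
  have grade_r: "grade (restr ?a (F 1)) r = 0"
    by (simp add: restr_def push_par_self)
  have "gen r \<notin> hker (F 1) (p 1) ?a"
    using min_free_res_hker_coeff[OF res, of 1 "gen r" ?a r] by (auto simp: gen_def)
  then show "gen r \<notin> hker (restr ?a (F 1)) (p 1) (grade (restr ?a (F 1)) r)"
    unfolding grade_r hker_restr lineL_0 .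
  fix J b d phit Phi0 Phi1
  assume "J = {..<card (basis (F 0))}" and "\<forall>j\<in>J. \<forall>e. d j = Some e \<longrightarrow> b j \<le> e"
    and "bar_iso (restr ?a (F 0)) (restr ?a (F 1)) (p 1) J b d phit"
    and "lifts (restr ?a (F 0)) (restr ?a (F 1)) (p 1) J b d phit Phi0 Phi1"
    and "fixed_ok (restr ?a (F 0)) (restr ?a (F 1)) J b d Phi0 Phi1"
  moreover have "is_fhom (restr ?a (F 1)) (restr ?a (F 0)) (p 1)"
    using is_fhom_restr min_free_resD(2)[OF res, of 1] by simp
  ultimately interpret bar_lift "restr ?a (F 0)" "restr ?a (F 1)" "p 1" J b d phit Phi0 Phi1
    using min_free_resD(1)[OF res] by unfold_locales (simp_all add: restr_def)
  have "\<forall>t < grade (restr ?a (F 1)) r.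
          happ (restr ?a (F 1)) (p 1) (gen r) \<notin> himg (restr ?a (F 1)) (p 1) t"
    unfolding grade_r himg_restr happ_restr
    using min_free_res_gen_image_not_earlier[OF res le_refl r_gen] by blast
  then show "\<exists>j\<in>J. kills (restr ?a (F 1)) d Phi1 r j"
    using r_gen by (intro kills_bar) (simp_all add: restr_def)
qed

end
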